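(* Let $K$ be a fan-like simplicial sphere of dimension $n-1$ with at most $n+3$ vertices. Then any real topological toric manifold over $K$ can be realized as the fixed point set of the conjugation of a topological toric manifold. Equivalently, for every non-singular characteristic map $\lambda:V(K)\to\mathbb{Z}_2^n$ over $\mathbb{Z}_2$ there is a non-singular characteristic map $\widetilde\lambda:V(K)\to\mathbb{Z}^n$ whose reduction modulo $2$ is $\lambda$.
   Context: A simplicial $(n-1)$-sphere $K$ is fan-like if it underlies a complete simplicial fan in $\mathbb{R}^n$. A characteristic map over $\mathbb{Z}_2$, $\lambda:V(K)\to\mathbb{Z}_2^n$, is non-singular if the vectors on every face of $K$ are linearly independent over $\mathbb{Z}_2$; a characteristic map $\widetilde\lambda:V(K)\to\mathbb{Z}^n$ is non-singular if the vectors on every face are part of a $\mathbb{Z}$-basis of $\mathbb{Z}^n$. Topological toric manifolds (as $T^n$-manifolds, with omniorientation) over $K$ correspond to complete non-singular characteristic maps over $\mathbb{Z}$ on $K$, real topological toric manifolds over $K$ correspond to non-singular characteristic maps over $\mathbb{Z}_2$ on $K$, and the fixed point set of the conjugation on the topological toric manifold of $\widetilde\lambda$ is the real topological toric manifold of the mod $2$ reduction of $\widetilde\lambda$. *)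

theory Defs
  imports "HOL-Analysis.Analysis" "HOL-Library.Z2"
begin

definition simplicial_complex :: "'a set \<Rightarrow> 'a set set \<Rightarrow> bool" where
  "simplicial_complex V K \<longleftrightarrow> finite V \<and> (\<forall>\<sigma>\<in>K. \<sigma> \<subseteq> V) \<and>
     (\<forall>\<sigma>\<in>K. \<forall>\<tau>. \<tau> \<subseteq> \<sigma> \<longrightarrow> \<tau> \<in> K) \<and> (\<forall>v\<in>V. {v} \<in> K)"

definition face_cone :: "('a \<Rightarrow> real ^ 'n) \<Rightarrow> 'a set \<Rightarrow> (real ^ 'n) set" where
  "face_cone w \<sigma> = {x. \<exists>c. (\<forall>v\<in>\<sigma>. c v \<ge> 0) \<and> x = (\<Sum>v\<in>\<sigma>. c v *\<^sub>R w v)}"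

text \<open>K underlies a complete simplicial fan in R^n (n = CARD('n)): there are ray vectors
  w(v), linearly independent on each face, whose face cones meet in common faces and cover R^n.\<close>
definition fan_like :: "'a set \<Rightarrow> 'a set set \<Rightarrow> ('a \<Rightarrow> real ^ 'n) \<Rightarrow> bool" where
  "fan_like V K w \<longleftrightarrow> simplicial_complex V K \<and>
     (\<forall>\<sigma>\<in>K. inj_on w \<sigma> \<and> independent (w ` \<sigma>)) \<and>
     (\<forall>\<sigma>\<in>K. \<forall>\<tau>\<in>K. face_cone w \<sigma> \<inter> face_cone w \<tau> = face_cone w (\<sigma> \<inter> \<tau>)) \<and>
     (\<Union>\<sigma>\<in>K. face_cone w \<sigma>) = UNIV"

definition fan_like_sphere :: "'a set \<Rightarrow> 'a set set \<Rightarrow> 'n::finite itself \<Rightarrow> bool" where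
  "fan_like_sphere V K _ \<longleftrightarrow> (\<exists>w :: 'a \<Rightarrow> real ^ 'n. fan_like V K w)"

definition nonsingular_Z2 :: "'a set set \<Rightarrow> ('a \<Rightarrow> bit ^ 'n) \<Rightarrow> bool" where
  "nonsingular_Z2 K lam \<longleftrightarrow> (\<forall>\<sigma>\<in>K. \<forall>c :: 'a \<Rightarrow> bit.
      (\<Sum>v\<in>\<sigma>. c v *s lam v) = 0 \<longrightarrow> (\<forall>v\<in>\<sigma>. c v = 0))"

definition Z_basis :: "('n::finite \<Rightarrow> int ^ 'n) \<Rightarrow> bool" where
  "Z_basis b \<longleftrightarrow> (\<forall>x :: int ^ 'n. \<exists>!c :: 'n \<Rightarrow> int. x = (\<Sum>i\<in>UNIV. c i *s b i))"

definition nonsingular_Z :: "'a set set \<Rightarrow> ('a \<Rightarrow> int ^ 'n::finite) \<Rightarrow> bool" where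
  "nonsingular_Z K lam \<longleftrightarrow> (\<forall>\<sigma>\<in>K. \<exists>b :: 'n \<Rightarrow> int ^ 'n. \<exists>f :: 'a \<Rightarrow> 'n.
      Z_basis b \<and> inj_on f \<sigma> \<and> (\<forall>v\<in>\<sigma>. b (f v) = lam v))"

definition mod2_reduction :: "int ^ 'n \<Rightarrow> bit ^ 'n" where
  "mod2_reduction x = (\<chi> i. of_int (x $ i))"

end

theory Submission
  imports Defs
begin

text \<open>A complete fan in \<open>\<real>\<^sup>n\<close> has a face \<open>\<sigma>\<^sub>0\<close> with at least \<open>n\<close> rays, since the cones of
  smaller faces are negligible. As \<open>\<lambda>\<close> is independent on \<open>\<sigma>\<^sub>0\<close>, its restriction there lifts to
  part of a \<open>\<int>\<close>-basis \<open>B\<close>; each of the at most three remaining vertices is lifted to the vector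
  whose \<open>B\<close>-coordinates are 0 or 1 and reduce to \<open>\<lambda>\<close>. For a face \<open>\<tau>\<close>, the vertices in
  \<open>\<tau> \<inter> \<sigma>\<^sub>0\<close> go to vectors of \<open>B\<close>, and those of \<open>\<tau> - \<sigma>\<^sub>0\<close> are adjoined one at a time by basis
  exchange. Independence modulo 2 provides an odd coordinate outside the basis vectors already
  in use; for at most three 0/1 vectors all such coordinates have absolute value at most 2, so
  the odd one is \<open>\<plusminus>1\<close> and the exchange yields again a \<open>\<int>\<close>-basis.\<close>

lemma of_int_bit: "(of_int k :: bit) = (if even k then 0 else 1)"
proof -
  obtain q where "k = 2 * q + k mod 2" by (metis mult_div_mod_eq)
  then show ?thesis
    by (cases "even k") (auto simp: even_iff_mod_2_eq_zero odd_iff_mod_2_eq_one)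
qed

lemma bit_vec_add_self [simp]: "(x :: bit ^ 'n) + x = 0"
  by (simp add: vec_eq_iff)

definition lincomb :: "('i::finite \<Rightarrow> int ^ 'n) \<Rightarrow> ('i \<Rightarrow> int) \<Rightarrow> int ^ 'n" where
  "lincomb b d = (\<Sum>i\<in>UNIV. d i *s b i)"

lemma lincomb_add: "lincomb b d + lincomb b e = lincomb b (\<lambda>i. d i + e i)"
  unfolding lincomb_def by (simp add: vec_eq_iff sum.distrib algebra_simps)

lemma lincomb_smult: "k *s lincomb b d = lincomb b (\<lambda>i. k * d i)"
  unfolding lincomb_def by (simp add: vec_eq_iff sum_distrib_left algebra_simps)

lemma lincomb_fun_upd: "lincomb (b(r := v)) d = lincomb b (d(r := 0)) + d r *s v"
proof -
  have "lincomb (b(r := v)) d = d r *s v + (\<Sum>i\<in>UNIV - {r}. d i *s b i)"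
    unfolding lincomb_def by (subst sum.remove[of _ r]) auto
  moreover have "lincomb b (d(r := 0)) = (\<Sum>i\<in>UNIV - {r}. d i *s b i)"
    unfolding lincomb_def by (subst sum.remove[of _ r]) (auto intro!: sum.cong)
  ultimately show ?thesis by (simp add: add.commute)
qed

lemma Z_basis_iff_bij_lincomb: "Z_basis b \<longleftrightarrow> bij (lincomb b)"
  by (simp add: Z_basis_def lincomb_def bij_iff eq_commute)

lemma Z_basis_axis: "Z_basis (\<lambda>i. axis i (1::int) :: int ^ 'n::finite)"
  unfolding Z_basis_def
proof
  fix x :: "int ^ 'n"
  show "\<exists>!c. x = (\<Sum>i\<in>UNIV. c i *s axis i 1)"
  proof
    show "x = (\<Sum>i\<in>UNIV. x $ i *s axis i 1)" by (simp add: basis_expansion)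
    fix c assume "x = (\<Sum>i\<in>UNIV. c i *s axis i 1)"
    then show "c = (\<lambda>i. x $ i)"
      by (auto simp: fun_eq_iff axis_def if_distrib cong: if_cong)
  qed
qed

text \<open>Coordinates with respect to \<open>b(r := lincomb b c)\<close> of the vector with \<open>b\<close>-coordinates \<open>d\<close>,
  valid when \<open>c r\<close> is a unit.\<close>
definition exchange_coords :: "('i \<Rightarrow> int) \<Rightarrow> 'i \<Rightarrow> ('i \<Rightarrow> int) \<Rightarrow> 'i \<Rightarrow> int" where
  "exchange_coords c r d = (\<lambda>i. if i = r then d r * c r else d i - d r * c r * c i)"

lemma lincomb_fun_upd_lincomb:
  "lincomb (b(r := lincomb b c)) d = lincomb b (\<lambda>i. if i = r then d r * c r else d i + d r * c i)"
  unfolding lincomb_fun_upd lincomb_smult lincomb_add by (rule arg_cong[where f = "lincomb b"]) auto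

lemma lincomb_exchange_coords:
  assumes "c r * c r = 1"
  shows "lincomb (b(r := lincomb b c)) (exchange_coords c r d) = lincomb b d"
proof -
  have "x * c r * c r = x" for x using assms by (metis mult.assoc mult.right_neutral)
  then show ?thesis
    unfolding lincomb_fun_upd_lincomb
    by (intro arg_cong[where f = "lincomb b"]) (auto simp: exchange_coords_def fun_eq_iff)
qed

lemma Z_basis_exchange:
  assumes "Z_basis b" and "c r * c r = 1"
  shows "Z_basis (b(r := lincomb b c))"
proof -
  define \<phi> where "\<phi> d = (\<lambda>i. if i = r then d r * c r else d i + d r * c i)" for d
  have "lincomb (b(r := lincomb b c)) = lincomb b \<circ> \<phi>"
    by (simp add: fun_eq_iff \<phi>_def lincomb_fun_upd_lincomb)
  moreover have "bij \<phi>"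
  proof (rule o_bij)
    have "x * c r * c r = x" for x using assms(2) by (metis mult.assoc mult.right_neutral)
    then show "\<phi> \<circ> exchange_coords c r = id" "exchange_coords c r \<circ> \<phi> = id"
      by (auto simp: fun_eq_iff \<phi>_def exchange_coords_def)
  qed
  ultimately show ?thesis
    using assms(1) by (simp add: Z_basis_iff_bij_lincomb bij_comp)
qed

lemma exchange_coords_01_abs_le_1:
  assumes "\<forall>i. c i \<in> {0, 1}" and "\<forall>i. d i \<in> {0, 1}" and "c r = 1"
  shows "\<bar>exchange_coords c r d i\<bar> \<le> 1"
  using assms(1,2)[rule_format, of i] assms(2)[rule_format, of r] assms(3)
  by (auto simp: exchange_coords_def)

lemma exchange_coords_abs_le_2:
  assumes "\<forall>j. \<bar>c j\<bar> \<le> 1" and "\<forall>j. \<bar>d j\<bar> \<le> 1" and "i \<noteq> r"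
  shows "\<bar>exchange_coords c r d i\<bar> \<le> 2"
proof -
  have "\<bar>exchange_coords c r d i\<bar> = \<bar>d i - d r * c r * c i\<bar>"
    using assms(3) by (simp add: exchange_coords_def)
  also have "\<dots> \<le> \<bar>d i\<bar> + \<bar>d r * c r * c i\<bar>"
    by (rule abs_triangle_ineq4)
  also have "\<dots> \<le> 2"
  proof -
    have "\<bar>d r * c r * c i\<bar> \<le> 1"
      using assms(1,2) by (simp add: abs_mult mult_le_one)
    then show ?thesis using assms(2)[rule_format, of i] by linarith
  qed
  finally show ?thesis .
qed

lemma mod2_reduction_add: "mod2_reduction (x + y) = mod2_reduction x + mod2_reduction y"
  by (simp add: mod2_reduction_def vec_eq_iff)

lemma mod2_reduction_smult: "mod2_reduction (k *s x) = of_int k *s mod2_reduction x"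
  by (simp add: mod2_reduction_def vec_eq_iff)

lemma mod2_reduction_sum: "mod2_reduction (\<Sum>i\<in>A. f i) = (\<Sum>i\<in>A. mod2_reduction (f i))"
  by (induction A rule: infinite_finite_induct)
    (auto simp: mod2_reduction_add mod2_reduction_def vec_eq_iff)

lemma mod2_reduction_lincomb:
  "mod2_reduction (lincomb b d) = (\<Sum>i\<in>UNIV. of_int (d i) *s mod2_reduction (b i))"
  unfolding lincomb_def mod2_reduction_sum mod2_reduction_smult ..

lemma Z_basis_lift_01:
  assumes "Z_basis b"
  obtains x where "\<forall>i. x i \<in> {0, 1}" and "mod2_reduction (lincomb b x) = z"
proof -
  obtain d where d: "(\<chi> i. if z $ i = 0 then 0 else 1) = lincomb b d"
    using assms unfolding Z_basis_iff_bij_lincomb by (metis bij_pointE)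
  define x where "x i = (if even (d i) then 0 else 1 :: int)" for i
  have "mod2_reduction (lincomb b x) = mod2_reduction (lincomb b d)"
    unfolding mod2_reduction_lincomb by (intro sum.cong) (auto simp: x_def of_int_bit)
  also have "\<dots> = z"
    unfolding d[symmetric] by (simp add: mod2_reduction_def vec_eq_iff)
  finally show ?thesis by (rule that[rotated]) (simp add: x_def)
qed

definition mod2_independent :: "('a \<Rightarrow> bit ^ 'n) \<Rightarrow> 'a set \<Rightarrow> bool" where
  "mod2_independent u A \<longleftrightarrow>
     (\<forall>c :: 'a \<Rightarrow> bit. (\<Sum>v\<in>A. c v *s u v) = 0 \<longrightarrow> (\<forall>v\<in>A. c v = 0))"

lemma nonsingular_Z2_iff: "nonsingular_Z2 K lam \<longleftrightarrow> (\<forall>\<sigma>\<in>K. mod2_independent lam \<sigma>)"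
  by (simp add: nonsingular_Z2_def mod2_independent_def)

lemma mod2_independent_subset:
  assumes "mod2_independent u A" and "B \<subseteq> A" and "finite A"
  shows "mod2_independent u B"
  unfolding mod2_independent_def
proof (intro allI impI ballI)
  fix c :: "'a \<Rightarrow> bit" and v
  assume c: "(\<Sum>v\<in>B. c v *s u v) = 0" and v: "v \<in> B"
  define c' where "c' v = (if v \<in> B then c v else 0)" for v
  have "(\<Sum>v\<in>A. c' v *s u v) = (\<Sum>v\<in>B. c v *s u v)"
    using assms(2,3) by (intro sum.mono_neutral_cong_right) (auto simp: c'_def)
  then have "\<forall>v\<in>A. c' v = 0" using assms(1) c unfolding mod2_independent_def by simp
  then have "c' v = 0" using assms(2) v by blast
  then show "c v = 0" using v by (simp add: c'_def)
qed

lemma mod2_independent_coeff_outside: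
  fixes e :: "'i::finite \<Rightarrow> bit ^ 'n"
  assumes "finite P" and "inj_on f P" and "\<forall>v\<in>P. e (f v) = u v" and "t \<notin> P"
    and "mod2_independent u (insert t P)" and "u t = (\<Sum>i\<in>UNIV. c i *s e i)"
  obtains r where "r \<notin> f ` P" and "c r \<noteq> 0"
proof -
  have "\<exists>r. r \<notin> f ` P \<and> c r \<noteq> 0"
  proof (rule ccontr)
    assume "\<not> ?thesis"
    then have "u t = (\<Sum>i\<in>f ` P. c i *s e i)"
      unfolding assms(6) by (intro sum.mono_neutral_right) auto
    also have "\<dots> = (\<Sum>v\<in>P. c (f v) *s u v)"
      using assms(2,3) by (subst sum.reindex) auto
    finally have u_t: "u t = (\<Sum>v\<in>P. c (f v) *s u v)" .
    define c' where "c' v = (if v = t then 1 else c (f v))" for v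
    have "(\<Sum>v\<in>insert t P. c' v *s u v) = u t + (\<Sum>v\<in>P. c (f v) *s u v)"
      using assms(1,4) by (auto simp: c'_def intro!: sum.cong)
    then have "(\<Sum>v\<in>insert t P. c' v *s u v) = 0"
      using u_t by simp
    then have "c' t = 0"
      using assms(5) unfolding mod2_independent_def by blast
    then show False by (simp add: c'_def)
  qed
  then show ?thesis using that by blast
qed

lemma mod2_independent_lift_Z_basis:
  fixes lam :: "'a \<Rightarrow> bit ^ 'n::finite"
  assumes "finite A" and "mod2_independent lam A"
  shows "\<exists>B g. Z_basis B \<and> inj_on g A \<and> (\<forall>v\<in>A. mod2_reduction (B (g v)) = lam v)"
  using assms
proof (induction A rule: finite_induct)
  case empty
  show ?case using Z_basis_axis by blast
next
  case (insert a A)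
  have "mod2_independent lam A"
    using mod2_independent_subset[OF insert.prems subset_insertI] insert.hyps(1) by simp
  then obtain B g where B: "Z_basis B" and g: "inj_on g A"
    and Bg: "\<forall>v\<in>A. mod2_reduction (B (g v)) = lam v"
    using insert.IH by blast
  obtain x where x: "\<forall>i. x i \<in> {0, 1}" and red_x: "mod2_reduction (lincomb B x) = lam a"
    using Z_basis_lift_01[OF B] .
  have "lam a = (\<Sum>i\<in>UNIV. of_int (x i) *s mod2_reduction (B i))"
    unfolding red_x[symmetric] mod2_reduction_lincomb ..
  then obtain r where r: "r \<notin> g ` A" "of_int (x r) \<noteq> (0 :: bit)"
    by (rule mod2_independent_coeff_outside[OF insert.hyps(1) g Bg insert.hyps(2) insert.prems])
  then have "x r = 1" using x[rule_format, of r] by (auto simp: of_int_bit)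
  then have "Z_basis (B(r := lincomb B x))"
    using Z_basis_exchange[OF B] by simp
  moreover have "inj_on (g(a := r)) (insert a A)"
    using g r(1) insert.hyps by (auto simp: inj_on_def image_iff)
  moreover have "\<forall>v\<in>insert a A. mod2_reduction ((B(r := lincomb B x)) ((g(a := r)) v)) = lam v"
    using Bg red_x r(1) insert.hyps by (auto simp: image_iff)
  ultimately show ?case by blast
qed

definition Z_basis_extending :: "('n::finite \<Rightarrow> int ^ 'n) \<Rightarrow> ('a \<Rightarrow> 'n) \<Rightarrow> ('a \<Rightarrow> int ^ 'n) \<Rightarrow> 'a set \<Rightarrow> bool"
  where "Z_basis_extending b f \<mu> A \<longleftrightarrow> Z_basis b \<and> inj_on f A \<and> (\<forall>v\<in>A. b (f v) = \<mu> v)"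

lemma nonsingular_Z_iff: "nonsingular_Z K \<mu> \<longleftrightarrow> (\<forall>\<sigma>\<in>K. \<exists>b f. Z_basis_extending b f \<mu> \<sigma>)"
  by (simp add: nonsingular_Z_def Z_basis_extending_def)

lemma Z_basis_extending_insert:
  assumes ext: "Z_basis_extending b f \<mu> P" and "finite P" and "t \<notin> P"
    and indep: "mod2_independent (mod2_reduction \<circ> \<mu>) (insert t P)"
    and \<mu>_t: "\<mu> t = lincomb b \<kappa>" and bound: "\<forall>i. i \<notin> f ` P \<longrightarrow> \<bar>\<kappa> i\<bar> \<le> 2"
  obtains r where "r \<notin> f ` P" and "\<bar>\<kappa> r\<bar> = 1"
    and "Z_basis_extending (b(r := \<mu> t)) (f(t := r)) \<mu> (insert t P)"
proof -
  have "inj_on f P" and "\<forall>v\<in>P. mod2_reduction (b (f v)) = (mod2_reduction \<circ> \<mu>) v"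
    using ext by (simp_all add: Z_basis_extending_def)
  moreover have "(mod2_reduction \<circ> \<mu>) t = (\<Sum>i\<in>UNIV. of_int (\<kappa> i) *s mod2_reduction (b i))"
    using \<mu>_t by (simp add: mod2_reduction_lincomb)
  ultimately obtain r where r: "r \<notin> f ` P" "of_int (\<kappa> r) \<noteq> (0 :: bit)"
    by (rule mod2_independent_coeff_outside[OF \<open>finite P\<close> _ _ \<open>t \<notin> P\<close> indep])
  have "odd (\<kappa> r)" and "\<bar>\<kappa> r\<bar> \<le> 2"
    using r bound by (auto simp: of_int_bit)
  then have "\<bar>\<kappa> r\<bar> = 1" by (auto simp: abs_if split: if_splits; presburger)
  then have "\<kappa> r * \<kappa> r = 1" by (metis abs_mult_self_eq mult_1)
  then have "Z_basis (b(r := \<mu> t))"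
    using ext Z_basis_exchange[of b \<kappa> r] \<mu>_t by (simp add: Z_basis_extending_def)
  moreover have "inj_on (f(t := r)) (insert t P)"
    using ext r(1) \<open>t \<notin> P\<close> by (auto simp: Z_basis_extending_def inj_on_def image_iff)
  moreover have "\<forall>v\<in>insert t P. (b(r := \<mu> t)) ((f(t := r)) v) = \<mu> v"
    using ext r(1) \<open>t \<notin> P\<close> by (auto simp: Z_basis_extending_def image_iff)
  ultimately show ?thesis
    by (intro that[OF r(1) \<open>\<bar>\<kappa> r\<bar> = 1\<close>]) (simp add: Z_basis_extending_def)
qed

lemma Z_basis_extending_insert_01:
  assumes ext: "Z_basis_extending b f \<mu> P" and "finite P" and "t \<notin> P"
    and indep: "mod2_independent (mod2_reduction \<circ> \<mu>) (insert t P)"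
    and \<mu>_t: "\<mu> t = lincomb b x" and x: "\<forall>i. x i \<in> {0, 1}"
  obtains r where "r \<notin> f ` P" and "x r = 1"
    and "Z_basis_extending (b(r := \<mu> t)) (f(t := r)) \<mu> (insert t P)"
proof -
  have "\<bar>x i\<bar> \<le> 2" for i using x[rule_format, of i] by auto
  then obtain r where "r \<notin> f ` P" "\<bar>x r\<bar> = 1"
    and "Z_basis_extending (b(r := \<mu> t)) (f(t := r)) \<mu> (insert t P)"
    using Z_basis_extending_insert[OF ext \<open>finite P\<close> \<open>t \<notin> P\<close> indep \<mu>_t] by blast
  moreover have "x r = 1" using x[rule_format, of r] \<open>\<bar>x r\<bar> = 1\<close> by auto
  ultimately show ?thesis using that by blast
qed

lemma Z_basis_extending_insert2_01:
  assumes ext: "Z_basis_extending b f \<mu> P" and "finite P" and "t1 \<notin> P" and "t2 \<notin> insert t1 P"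
    and indep: "mod2_independent (mod2_reduction \<circ> \<mu>) (insert t2 (insert t1 P))"
    and \<mu>_t1: "\<mu> t1 = lincomb b x1" and \<mu>_t2: "\<mu> t2 = lincomb b x2"
    and x1: "\<forall>i. x1 i \<in> {0, 1}" and x2: "\<forall>i. x2 i \<in> {0, 1}"
  obtains r1 r2 where "r1 \<notin> f ` P" and "r2 \<notin> f ` P" and "r2 \<noteq> r1" and "x1 r1 = 1"
    and "\<bar>exchange_coords x1 r1 x2 r2\<bar> = 1"
    and "Z_basis_extending (b(r1 := \<mu> t1, r2 := \<mu> t2)) (f(t1 := r1, t2 := r2)) \<mu>
           (insert t2 (insert t1 P))"
proof -
  have "mod2_independent (mod2_reduction \<circ> \<mu>) (insert t1 P)"
    using mod2_independent_subset[OF indep] \<open>finite P\<close> by blast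
  then obtain r1 where r1: "r1 \<notin> f ` P" "x1 r1 = 1"
    and ext1: "Z_basis_extending (b(r1 := \<mu> t1)) (f(t1 := r1)) \<mu> (insert t1 P)"
    by (rule Z_basis_extending_insert_01[OF ext \<open>finite P\<close> \<open>t1 \<notin> P\<close> _ \<mu>_t1 x1])
  have "\<mu> t2 = lincomb (b(r1 := \<mu> t1)) (exchange_coords x1 r1 x2)"
    using lincomb_exchange_coords[of x1 r1 b x2] r1(2) \<mu>_t1 \<mu>_t2 by simp
  moreover have "\<bar>exchange_coords x1 r1 x2 i\<bar> \<le> 2" for i
    using exchange_coords_01_abs_le_1[OF x1 x2 r1(2), of i] by linarith
  ultimately obtain r2 where r2: "r2 \<notin> (f(t1 := r1)) ` insert t1 P"
    "\<bar>exchange_coords x1 r1 x2 r2\<bar> = 1"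
    and ext2: "Z_basis_extending (b(r1 := \<mu> t1, r2 := \<mu> t2)) (f(t1 := r1, t2 := r2)) \<mu>
           (insert t2 (insert t1 P))"
    using Z_basis_extending_insert[OF ext1 _ \<open>t2 \<notin> insert t1 P\<close> indep] \<open>finite P\<close>
    by (metis finite_insert)
  moreover have "(f(t1 := r1)) ` insert t1 P = insert r1 (f ` P)"
    using \<open>t1 \<notin> P\<close> by (auto simp: image_iff)
  ultimately show ?thesis
    using that[OF r1(1) _ _ r1(2) r2(2) ext2] by blast
qed

lemma Z_basis_extending_insert3_01:
  assumes ext: "Z_basis_extending b f \<mu> P" and "finite P" and "t1 \<notin> P" and "t2 \<notin> insert t1 P"
    and "t3 \<notin> insert t2 (insert t1 P)"
    and indep: "mod2_independent (mod2_reduction \<circ> \<mu>) (insert t3 (insert t2 (insert t1 P)))"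
    and \<mu>_t1: "\<mu> t1 = lincomb b x1" and \<mu>_t2: "\<mu> t2 = lincomb b x2" and \<mu>_t3: "\<mu> t3 = lincomb b x3"
    and x1: "\<forall>i. x1 i \<in> {0, 1}" and x2: "\<forall>i. x2 i \<in> {0, 1}" and x3: "\<forall>i. x3 i \<in> {0, 1}"
  shows "\<exists>b' f'. Z_basis_extending b' f' \<mu> (insert t3 (insert t2 (insert t1 P)))"
proof -
  have "mod2_independent (mod2_reduction \<circ> \<mu>) (insert t2 (insert t1 P))"
    using mod2_independent_subset[OF indep] \<open>finite P\<close> by blast
  then obtain r1 r2 where r: "r2 \<noteq> r1" "x1 r1 = 1" "\<bar>exchange_coords x1 r1 x2 r2\<bar> = 1"
    and ext2: "Z_basis_extending (b(r1 := \<mu> t1, r2 := \<mu> t2)) (f(t1 := r1, t2 := r2)) \<mu>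
           (insert t2 (insert t1 P))"
    by (rule Z_basis_extending_insert2_01[OF ext \<open>finite P\<close> \<open>t1 \<notin> P\<close> \<open>t2 \<notin> insert t1 P\<close> _
          \<mu>_t1 \<mu>_t2 x1 x2])
  define \<kappa>2 where "\<kappa>2 = exchange_coords x1 r1 x2"
  define \<kappa>3 where "\<kappa>3 = exchange_coords x1 r1 x3"
  have \<kappa>2_le: "\<forall>i. \<bar>\<kappa>2 i\<bar> \<le> 1"
    unfolding \<kappa>2_def using exchange_coords_01_abs_le_1[OF x1 x2 r(2)] by blast
  have \<kappa>3_le: "\<forall>i. \<bar>\<kappa>3 i\<bar> \<le> 1"
    unfolding \<kappa>3_def using exchange_coords_01_abs_le_1[OF x1 x3 r(2)] by blast
  have "\<mu> t2 = lincomb (b(r1 := \<mu> t1)) \<kappa>2"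
    unfolding \<kappa>2_def \<mu>_t1 \<mu>_t2 using lincomb_exchange_coords[of x1 r1 b x2] r(2) by simp
  moreover have "\<mu> t3 = lincomb (b(r1 := \<mu> t1)) \<kappa>3"
    unfolding \<kappa>3_def \<mu>_t1 \<mu>_t3 using lincomb_exchange_coords[of x1 r1 b x3] r(2) by simp
  moreover have "\<kappa>2 r2 * \<kappa>2 r2 = 1"
    using r(3) unfolding \<kappa>2_def by (metis abs_mult_self_eq mult_1)
  ultimately have \<mu>_t3': "\<mu> t3 = lincomb (b(r1 := \<mu> t1, r2 := \<mu> t2)) (exchange_coords \<kappa>2 r2 \<kappa>3)"
    using lincomb_exchange_coords[of \<kappa>2 r2 "b(r1 := \<mu> t1)" \<kappa>3] by metis
  have "\<forall>i. i \<notin> (f(t1 := r1, t2 := r2)) ` insert t2 (insert t1 P)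
      \<longrightarrow> \<bar>exchange_coords \<kappa>2 r2 \<kappa>3 i\<bar> \<le> 2"
    using exchange_coords_abs_le_2[OF \<kappa>2_le \<kappa>3_le] by fastforce
  moreover have "finite (insert t2 (insert t1 P))" using \<open>finite P\<close> by simp
  ultimately obtain r3 where "Z_basis_extending (b(r1 := \<mu> t1, r2 := \<mu> t2, r3 := \<mu> t3))
      (f(t1 := r1, t2 := r2, t3 := r3)) \<mu> (insert t3 (insert t2 (insert t1 P)))"
    using Z_basis_extending_insert[OF ext2 _ \<open>t3 \<notin> insert t2 (insert t1 P)\<close> indep \<mu>_t3']
    by blast
  then show ?thesis by blast
qed

lemma Z_basis_extending_union_01:
  assumes ext: "Z_basis_extending b f \<mu> S" and "finite S" and "finite T" and "S \<inter> T = {}"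
    and "card T \<le> 3"
    and lifts: "\<forall>t\<in>T. \<exists>x. \<mu> t = lincomb b x \<and> (\<forall>i. x i \<in> {0, 1})"
    and indep: "mod2_independent (mod2_reduction \<circ> \<mu>) (S \<union> T)"
  shows "\<exists>b' f'. Z_basis_extending b' f' \<mu> (S \<union> T)"
proof -
  obtain x where x: "\<And>t. t \<in> T \<Longrightarrow> \<mu> t = lincomb b (x t)" "\<And>t. t \<in> T \<Longrightarrow> \<forall>i. x t i \<in> {0, 1}"
    using bchoice[OF lifts] by blast
  have "card T = 0 \<or> card T = 1 \<or> card T = 2 \<or> card T = 3"
    using \<open>card T \<le> 3\<close> by linarith
  then consider "T = {}" | t1 where "T = {t1}"
    | t1 t2 where "T = {t1, t2}" "t1 \<noteq> t2"
    | t1 t2 t3 where "T = {t1, t2, t3}" "t1 \<noteq> t2" "t2 \<noteq> t3" "t1 \<noteq> t3"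
    using \<open>finite T\<close> by (auto simp: card_1_singleton_iff card_2_iff card_3_iff)
  then show ?thesis
  proof cases
    case 1
    then show ?thesis using ext by auto
  next
    case (2 t1)
    then have T: "S \<union> T = insert t1 S" "t1 \<notin> S" "t1 \<in> T" using \<open>S \<inter> T = {}\<close> by auto
    obtain r where "Z_basis_extending (b(r := \<mu> t1)) (f(t1 := r)) \<mu> (insert t1 S)"
      by (rule Z_basis_extending_insert_01[OF ext \<open>finite S\<close> T(2) indep[unfolded T(1)]
            x[OF T(3)]])
    then show ?thesis unfolding T(1) by blast
  next
    case (3 t1 t2)
    then have T: "S \<union> T = insert t2 (insert t1 S)" "t1 \<notin> S" "t2 \<notin> insert t1 S" "t1 \<in> T" "t2 \<in> T"
      using \<open>S \<inter> T = {}\<close> by auto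
    obtain r1 r2 where "Z_basis_extending (b(r1 := \<mu> t1, r2 := \<mu> t2))
        (f(t1 := r1, t2 := r2)) \<mu> (insert t2 (insert t1 S))"
      by (rule Z_basis_extending_insert2_01[OF ext \<open>finite S\<close> T(2,3) indep[unfolded T(1)]
            x(1)[OF T(4)] x(1)[OF T(5)] x(2)[OF T(4)] x(2)[OF T(5)]])
    then show ?thesis unfolding T(1) by blast
  next
    case (4 t1 t2 t3)
    then have T: "S \<union> T = insert t3 (insert t2 (insert t1 S))" "t1 \<notin> S" "t2 \<notin> insert t1 S"
      "t3 \<notin> insert t2 (insert t1 S)" "t1 \<in> T" "t2 \<in> T" "t3 \<in> T"
      using \<open>S \<inter> T = {}\<close> by auto
    show ?thesis
      unfolding T(1)
      by (rule Z_basis_extending_insert3_01[OF ext \<open>finite S\<close> T(2-4) indep[unfolded T(1)]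
            x(1)[OF T(5)] x(1)[OF T(6)] x(1)[OF T(7)] x(2)[OF T(5)] x(2)[OF T(6)] x(2)[OF T(7)]])
  qed
qed

lemma fan_like_face_card_ge:
  fixes w :: "'a \<Rightarrow> real ^ 'n::finite"
  assumes "fan_like V K w"
  obtains \<sigma> where "\<sigma> \<in> K" and "CARD('n) \<le> card \<sigma>"
proof -
  have sc: "simplicial_complex V K" and cover: "(\<Union>\<sigma>\<in>K. face_cone w \<sigma>) = UNIV"
    using assms unfolding fan_like_def by auto
  have "\<exists>\<sigma>\<in>K. CARD('n) \<le> card \<sigma>"
  proof (rule ccontr)
    assume "\<not> ?thesis"
    then have small: "card \<sigma> < CARD('n)" if "\<sigma> \<in> K" for \<sigma> using that by auto
    have "negligible (face_cone w \<sigma>)" if "\<sigma> \<in> K" for \<sigma>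
    proof -
      have "finite \<sigma>" using sc that unfolding simplicial_complex_def by (meson finite_subset)
      have "face_cone w \<sigma> \<subseteq> span (w ` \<sigma>)"
        unfolding face_cone_def by (auto intro!: span_sum span_scale[OF span_base])
      moreover have "dim (span (w ` \<sigma>)) < DIM(real ^ 'n)"
        using dim_le_card'[of "w ` \<sigma>"] card_image_le[OF \<open>finite \<sigma>\<close>, of w]
          small[OF that] \<open>finite \<sigma>\<close> by (simp add: dim_span)
      ultimately show ?thesis using negligible_lowdim negligible_subset by blast
    qed
    moreover have "finite K"
      using sc unfolding simplicial_complex_def by (meson Pow_iff finite_Pow_iff finite_subset subsetI)
    ultimately have "negligible (\<Union>\<sigma>\<in>K. face_cone w \<sigma>)" by (intro negligible_Union) auto
    then show False using cover by simp
  qed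
  then show ?thesis using that by blast
qed

lemma nonsingular_Z_of_lift_01:
  fixes \<mu> :: "'a \<Rightarrow> int ^ 'n::finite"
  assumes sc: "simplicial_complex V K" and "\<sigma>\<^sub>0 \<in> K" and "card V \<le> card \<sigma>\<^sub>0 + 3"
    and B: "Z_basis B" and g: "inj_on g \<sigma>\<^sub>0" and \<mu>_face: "\<forall>v\<in>\<sigma>\<^sub>0. \<mu> v = B (g v)"
    and \<mu>_lift: "\<forall>v\<in>V - \<sigma>\<^sub>0. \<exists>x. \<mu> v = lincomb B x \<and> (\<forall>i. x i \<in> {0, 1})"
    and indep: "\<forall>\<sigma>\<in>K. mod2_independent (mod2_reduction \<circ> \<mu>) \<sigma>"
  shows "nonsingular_Z K \<mu>"
  unfolding nonsingular_Z_iff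
proof
  fix \<tau> assume "\<tau> \<in> K"
  have "finite V" and faces: "\<And>\<sigma>. \<sigma> \<in> K \<Longrightarrow> \<sigma> \<subseteq> V"
    using sc unfolding simplicial_complex_def by auto
  then have "finite \<tau>" and "finite \<sigma>\<^sub>0" using \<open>\<tau> \<in> K\<close> \<open>\<sigma>\<^sub>0 \<in> K\<close> by (meson finite_subset)+
  have "card (\<tau> - \<sigma>\<^sub>0) \<le> card (V - \<sigma>\<^sub>0)"
    using faces[OF \<open>\<tau> \<in> K\<close>] \<open>finite V\<close> by (intro card_mono) auto
  also have "\<dots> \<le> 3"
    using card_Diff_subset[OF \<open>finite \<sigma>\<^sub>0\<close> faces[OF \<open>\<sigma>\<^sub>0 \<in> K\<close>]] \<open>card V \<le> card \<sigma>\<^sub>0 + 3\<close> by linarith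
  finally have "card (\<tau> - \<sigma>\<^sub>0) \<le> 3" .
  moreover have "Z_basis_extending B g \<mu> (\<tau> \<inter> \<sigma>\<^sub>0)"
    using B inj_on_subset[OF g] \<mu>_face by (simp add: Z_basis_extending_def)
  moreover have "\<forall>t\<in>\<tau> - \<sigma>\<^sub>0. \<exists>x. \<mu> t = lincomb B x \<and> (\<forall>i. x i \<in> {0, 1})"
    using \<mu>_lift faces[OF \<open>\<tau> \<in> K\<close>] by blast
  moreover have "\<tau> \<inter> \<sigma>\<^sub>0 \<union> (\<tau> - \<sigma>\<^sub>0) = \<tau>" by blast
  ultimately show "\<exists>b f. Z_basis_extending b f \<mu> \<tau>"
    using Z_basis_extending_union_01[of B g \<mu> "\<tau> \<inter> \<sigma>\<^sub>0" "\<tau> - \<sigma>\<^sub>0"] indep \<open>\<tau> \<in> K\<close> \<open>finite \<tau>\<close>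
    by auto
qed

theorem corollary9p3:
  fixes V :: "'a set" and K :: "'a set set" and lam :: "'a \<Rightarrow> bit ^ 'n::finite"
  assumes "fan_like_sphere V K TYPE('n)"
    and "card V \<le> CARD('n) + 3"
    and "nonsingular_Z2 K lam"
  shows "\<exists>\<mu> :: 'a \<Rightarrow> int ^ 'n. nonsingular_Z K \<mu> \<and> (\<forall>v\<in>V. mod2_reduction (\<mu> v) = lam v)"
proof -
  obtain w :: "'a \<Rightarrow> real ^ 'n" where fan: "fan_like V K w"
    using assms(1) unfolding fan_like_sphere_def by blast
  then have sc: "simplicial_complex V K" by (simp add: fan_like_def)
  obtain \<sigma>\<^sub>0 where "\<sigma>\<^sub>0 \<in> K" and "CARD('n) \<le> card \<sigma>\<^sub>0" by (rule fan_like_face_card_ge[OF fan])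
  moreover have indep: "\<forall>\<sigma>\<in>K. mod2_independent lam \<sigma>"
    using assms(3) by (simp add: nonsingular_Z2_iff)
  moreover have "finite \<sigma>\<^sub>0"
    using sc \<open>\<sigma>\<^sub>0 \<in> K\<close> unfolding simplicial_complex_def by (meson finite_subset)
  ultimately obtain B g where B: "Z_basis B" and "inj_on g \<sigma>\<^sub>0"
    and Bg: "\<forall>v\<in>\<sigma>\<^sub>0. mod2_reduction (B (g v)) = lam v"
    using mod2_independent_lift_Z_basis by blast
  have "\<exists>x. (\<forall>i. x i \<in> {0, 1}) \<and> mod2_reduction (lincomb B x) = lam v" for v
    by (rule Z_basis_lift_01[OF B]) blast
  then obtain x where x: "\<And>v. \<forall>i. x v i \<in> {0, 1}" "\<And>v. mod2_reduction (lincomb B (x v)) = lam v"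
    by metis
  define \<mu> where "\<mu> v = (if v \<in> \<sigma>\<^sub>0 then B (g v) else lincomb B (x v))" for v
  have red: "mod2_reduction \<circ> \<mu> = lam"
    using Bg x(2) by (auto simp: \<mu>_def)
  have "nonsingular_Z K \<mu>"
    using nonsingular_Z_of_lift_01[OF sc \<open>\<sigma>\<^sub>0 \<in> K\<close> _ B \<open>inj_on g \<sigma>\<^sub>0\<close>, of \<mu>] x(1) indep red
      assms(2) \<open>CARD('n) \<le> card \<sigma>\<^sub>0\<close> by (auto simp: \<mu>_def)
  then show ?thesis using red by (auto simp: fun_eq_iff)
qed

end
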